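(* The family $\mathcal S$ of SIP sets is not a filterdual; that is, there exist sets $A_1,A_2\subset\mathbb N$ such that $A_1\cup A_2$ is an SIP set but neither $A_1$ nor $A_2$ is an SIP set.
   Context: $\mathbb N=\{1,2,\dots\}$. For a finite set $F\subset\mathbb Z$, $\sigma_F$ is the sum of its elements ($\sigma_\emptyset=0$). For $A\subset\mathbb Z$: $IP(A)=\{\sigma_F:F\subset A\text{ finite}\}$ and $SIP(A)=\{a-b:a,b\in IP(A)\}$. A set $B\subset\mathbb N$ is an SIP set if there exists an infinite $A\subset\mathbb N$ with $SIP(A)\cap\mathbb N\subset B$. A family $\mathcal F$ of subsets of $\mathbb N$ (closed under taking supersets) is a filterdual if $A_1\cup A_2\in\mathcal F$ implies $A_1\in\mathcal F$ or $A_2\in\mathcal F$. *)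

theory Defs
  imports Main
begin

text \<open>Positive integers, playing the role of the paper's N = {1,2,...}.\<close>
definition Npos :: "int set" where
  "Npos = {n. n \<ge> 1}"

definition IP :: "int set \<Rightarrow> int set" where
  "IP A = {\<Sum>F | F. F \<subseteq> A \<and> finite F}"

definition SIP :: "int set \<Rightarrow> int set" where
  "SIP A = {a - b | a b. a \<in> IP A \<and> b \<in> IP A}"

definition is_SIP_set :: "int set \<Rightarrow> bool" where
  "is_SIP_set B \<longleftrightarrow> B \<subseteq> Npos \<and>
     (\<exists>A. A \<subseteq> Npos \<and> infinite A \<and> SIP A \<inter> Npos \<subseteq> B)"

end

theory Submission
  imports Defs
begin

text \<open>Colour each positive integer by its last nonzero ternary digit. For an infinite
  A \<subseteq> \<nat>, take a \<in> A whose power of 3 is minimal and any larger b \<in> A. If b has more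
  factors of 3 than a, then a + b and b - a have last digits r and 3 - r, where r is that
  of a; if the powers agree, then either b or a + b has the digit different from a's.
  Hence SIP(A) meets both colour classes, so neither class is an SIP set, while their
  union \<nat> is.\<close>

definition ternary_class :: "int \<Rightarrow> int set" where
  "ternary_class r = {n. n \<ge> 1 \<and> (\<exists>k::nat. \<exists>m. n = 3^k * (3*m + r))}"

lemma ternary_classI: "x = 3^k * (3*m + r) \<Longrightarrow> x \<ge> 1 \<Longrightarrow> x \<in> ternary_class r"
  unfolding ternary_class_def by auto

lemma ternary_repr_unique_le:
  fixes m l r s :: int
  assumes r: "r \<in> {1,2}" and s: "s \<in> {1,2}"
    and eq: "3^k * (3*m + r) = 3^j * (3*l + s)" and "k \<le> j"
  shows "k = j \<and> r = s"
proof -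
  obtain d where d: "j = k + d" using \<open>k \<le> j\<close> le_Suc_ex by blast
  have e: "3*m + r = 3^d * (3*l + s)" using eq d by (simp add: power_add)
  show ?thesis
  proof (cases d)
    case 0
    then have "(3*m + r) mod 3 = (3*l + s) mod 3" using e by simp
    then show ?thesis using 0 d r s by auto
  next
    case (Suc d')
    then have "(3*m + r) mod 3 = 0" using e by simp
    then show ?thesis using r by auto
  qed
qed

lemma ternary_repr_unique:
  fixes m l r s :: int
  assumes "r \<in> {1,2}" "s \<in> {1,2}" "3^k * (3*m + r) = 3^j * (3*l + s)"
  shows "k = j \<and> r = s"
  using ternary_repr_unique_le[OF assms] ternary_repr_unique_le[OF assms(2,1) assms(3)[symmetric]]
  by (cases "k \<le> j") auto

lemma ternary_repr_exists:
  fixes n :: int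
  assumes "n \<ge> 1"
  shows "\<exists>k::nat. \<exists>m r. r \<in> {1,2} \<and> n = 3^k * (3*m + r)"
  using assms
proof (induction "nat n" arbitrary: n rule: less_induct)
  case less
  show ?case
  proof (cases "n mod 3 = 0")
    case True
    then obtain n' where n': "n = 3*n'" by auto
    with less.prems have "n' \<ge> 1" "nat n' < nat n" by simp_all
    then obtain k m r where "r \<in> {1,2}" "n' = 3^k * (3*m + r)" using less.hyps by blast
    then show ?thesis using n' by (intro exI[of _ "Suc k"]) auto
  next
    case False
    then have "n mod 3 \<in> {1,2}" by auto
    moreover have "n = 3^0 * (3*(n div 3) + n mod 3)" by simp
    ultimately show ?thesis by blast
  qed
qed

lemma ternary_classes_disjoint: "ternary_class 1 \<inter> ternary_class 2 = {}"
  unfolding ternary_class_def using ternary_repr_unique[of 1 2] by fastforce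

lemma ternary_classes_Un: "ternary_class 1 \<union> ternary_class 2 = Npos"
proof
  show "ternary_class 1 \<union> ternary_class 2 \<subseteq> Npos"
    unfolding ternary_class_def Npos_def by auto
  show "Npos \<subseteq> ternary_class 1 \<union> ternary_class 2"
  proof
    fix n assume "n \<in> Npos"
    then have "n \<ge> 1" unfolding Npos_def by simp
    then obtain k m r where "r \<in> {1,2}" "n = 3^k * (3*m + r)"
      using ternary_repr_exists by blast
    then show "n \<in> ternary_class 1 \<union> ternary_class 2"
      using \<open>n \<ge> 1\<close> by (auto intro: ternary_classI)
  qed
qed

lemma ternary_classes_of_pair:
  fixes a b m l r s :: int
  assumes r: "r \<in> {1,2}" and s: "s \<in> {1,2}"
    and a: "a = 3^k * (3*m + r)" and b: "b = 3^j * (3*l + s)"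
    and "k \<le> j" "1 \<le> a" "a < b"
  shows "\<exists>x\<in>{a, b, a + b, b - a}. \<exists>y\<in>{a, b, a + b, b - a}.
           x \<in> ternary_class r \<and> y \<in> ternary_class (3 - r)"
proof (cases "k = j")
  case True
  have a_in: "a \<in> ternary_class r" using a \<open>1 \<le> a\<close> by (rule ternary_classI)
  show ?thesis
  proof (cases "r = s")
    case True
    have "a + b = 3^k * (3*(m + l + r - 1) + (3 - r))"
      using a b \<open>k = j\<close> True by (simp add: algebra_simps)
    then have "a + b \<in> ternary_class (3 - r)"
      by (rule ternary_classI) (use \<open>1 \<le> a\<close> \<open>a < b\<close> in linarith)
    then show ?thesis using a_in by blast
  next
    case False
    then have "b = 3^j * (3*l + (3 - r))" using r s b by auto
    then have "b \<in> ternary_class (3 - r)"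
      by (rule ternary_classI) (use \<open>1 \<le> a\<close> \<open>a < b\<close> in linarith)
    then show ?thesis using a_in by blast
  qed
next
  case False
  with \<open>k \<le> j\<close> obtain d where d: "j = k + Suc d"
    using less_imp_Suc_add by fastforce
  define t where "t = 3^d * (3*l + s)"
  have bt: "b = 3^k * (3*t)" using b unfolding d t_def by (simp add: power_add ac_simps)
  have "a + b = 3^k * (3*(t + m) + r)" using bt a by (simp add: algebra_simps)
  then have "a + b \<in> ternary_class r"
    by (rule ternary_classI) (use \<open>1 \<le> a\<close> \<open>a < b\<close> in linarith)
  moreover have "b - a = 3^k * (3*(t - m - 1) + (3 - r))" using bt a by (simp add: algebra_simps)
  then have "b - a \<in> ternary_class (3 - r)"
    by (rule ternary_classI) (use \<open>a < b\<close> in linarith)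
  ultimately show ?thesis by blast
qed

lemma ex_min_ternary_exponent:
  assumes "A \<subseteq> Npos" "A \<noteq> {}"
  obtains a k m r where "a \<in> A" "r \<in> {1,2}" "a = 3^k * (3*m + r)"
    "\<And>b j l s. b \<in> A \<Longrightarrow> s \<in> {1,2} \<Longrightarrow> b = 3^j * (3*l + s) \<Longrightarrow> k \<le> j"
proof -
  define P where "P k \<longleftrightarrow> (\<exists>a\<in>A. \<exists>m r. r \<in> {1,2} \<and> a = 3^k * (3*m + r))" for k :: nat
  obtain a0 where "a0 \<in> A" using assms(2) by blast
  moreover have "a0 \<ge> 1" using calculation assms(1) unfolding Npos_def by auto
  then obtain k0 m0 r0 where "r0 \<in> {1,2}" "a0 = 3^k0 * (3*m0 + r0)"
    using ternary_repr_exists by blast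
  ultimately have "P k0" unfolding P_def by blast
  define k where "k = (LEAST k. P k)"
  have "P k" unfolding k_def using \<open>P k0\<close> by (rule LeastI)
  then obtain a m r where a: "a \<in> A" "r \<in> {1,2}" "a = 3^k * (3*m + r)"
    unfolding P_def by blast
  show thesis
  proof (rule that[OF a])
    fix b j l s assume "b \<in> A" "s \<in> {1,2}" "b = 3^j * (3*l + s)"
    then have "P j" unfolding P_def by blast
    then show "k \<le> j" unfolding k_def by (rule Least_le)
  qed
qed

lemma sum_in_IP: "finite F \<Longrightarrow> F \<subseteq> A \<Longrightarrow> \<Sum>F \<in> IP A"
  unfolding IP_def by blast

lemma diff_in_SIP: "x \<in> IP A \<Longrightarrow> y \<in> IP A \<Longrightarrow> x - y \<in> SIP A"
  unfolding SIP_def by blast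

lemma IP_subset_SIP: "IP A \<subseteq> SIP A"
proof
  fix x assume "x \<in> IP A"
  moreover have "0 \<in> IP A" using sum_in_IP[of "{}" A] by simp
  ultimately show "x \<in> SIP A" using diff_in_SIP[of x A 0] by simp
qed

lemma SIP_meets_ternary_class:
  assumes A: "A \<subseteq> Npos" "infinite A" and c: "c \<in> {1,2}"
  shows "SIP A \<inter> Npos \<inter> ternary_class c \<noteq> {}"
proof -
  obtain a k m r where a: "a \<in> A" "r \<in> {1,2}" "a = 3^k * (3*m + r)"
    and min: "\<And>b j l s. b \<in> A \<Longrightarrow> s \<in> {1,2} \<Longrightarrow> b = 3^j * (3*l + s) \<Longrightarrow> k \<le> j"
    using ex_min_ternary_exponent[OF A(1)] A(2) by (metis infinite_imp_nonempty)
  have "\<not> A \<subseteq> {1..a}" using A(2) finite_subset by blast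
  then obtain b where b: "b \<in> A" "a < b" using A(1) unfolding Npos_def by force
  have "a \<ge> 1" using a(1) A(1) unfolding Npos_def by auto
  have "b \<ge> 1" using \<open>a \<ge> 1\<close> b(2) by linarith
  then obtain j l s where s: "s \<in> {1,2}" "b = 3^j * (3*l + s)"
    using ternary_repr_exists by blast
  obtain x y where xy: "x \<in> {a, b, a + b, b - a}" "y \<in> {a, b, a + b, b - a}"
    "x \<in> ternary_class r" "y \<in> ternary_class (3 - r)"
    using ternary_classes_of_pair[OF a(2) s(1) a(3) s(2) min[OF b(1) s] \<open>a \<ge> 1\<close> b(2)]
    by blast
  have "{a, b, a + b} \<subseteq> IP A"
    using sum_in_IP[of "{a}" A] sum_in_IP[of "{b}" A] sum_in_IP[of "{a, b}" A] a(1) b by auto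
  then have "{a, b, a + b, b - a} \<subseteq> SIP A \<inter> Npos"
    using IP_subset_SIP diff_in_SIP[of b A a] \<open>a \<ge> 1\<close> b(2) unfolding Npos_def by auto
  moreover have "c = r \<or> c = 3 - r" using a(2) c by auto
  ultimately show ?thesis using xy by blast
qed

lemma is_SIP_set_Npos: "is_SIP_set Npos"
proof -
  have "infinite Npos" unfolding Npos_def using infinite_Ici[of "1::int"] by (simp add: atLeast_def)
  then show ?thesis unfolding is_SIP_set_def by blast
qed

theorem theorem3p5:
  shows "\<exists>A1 A2. A1 \<subseteq> Npos \<and> A2 \<subseteq> Npos \<and> is_SIP_set (A1 \<union> A2)
           \<and> \<not> is_SIP_set A1 \<and> \<not> is_SIP_set A2"
proof (intro exI conjI)
  show "ternary_class 1 \<subseteq> Npos" "ternary_class 2 \<subseteq> Npos"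
    using ternary_classes_Un by auto
  show "is_SIP_set (ternary_class 1 \<union> ternary_class 2)"
    unfolding ternary_classes_Un by (rule is_SIP_set_Npos)
  show "\<not> is_SIP_set (ternary_class 1)"
    unfolding is_SIP_set_def using SIP_meets_ternary_class[of _ 2] ternary_classes_disjoint by blast
  show "\<not> is_SIP_set (ternary_class 2)"
    unfolding is_SIP_set_def using SIP_meets_ternary_class[of _ 1] ternary_classes_disjoint by blast
qed

end
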